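(* Let $R$ be a commutative domain with unit, let $f\in R$ be nonzero and non-invertible, and let $S=R[u,v]/(uv-f)$. Then the following are equivalent: the image of $u$ is a prime element of $S$; the image of $v$ is a prime element of $S$; $f$ is a prime element of $R$.
   Context: A nonzero non-invertible element $r$ of a domain is prime if whenever $r$ divides a product $ab$, it divides $a$ or $b$. *)

theory Defs
  imports "HOL-Computational_Algebra.Computational_Algebra"
begin

text \<open>R[u,v] is modelled as the iterated polynomial ring (R[u])[v], i.e. type 'a poly poly:
  the inner variable is u, the outer variable is v.\<close>

definition var_u :: "'a::comm_ring_1 poly poly" where
  "var_u = [:[:0, 1:]:]"

definition var_v :: "'a::comm_ring_1 poly poly" where
  "var_v = [:0, 1:]"

definition uv_rel :: "'a::comm_ring_1 \<Rightarrow> 'a poly poly" where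
  "uv_rel f = var_u * var_v - [:[:f:]:]"

text \<open>Divisibility in the quotient ring A/(m), expressed on representatives:
  the class of x divides the class of a iff a - x*c is in the ideal (m) for some c.\<close>

definition dvd_mod :: "'b::comm_ring_1 \<Rightarrow> 'b \<Rightarrow> 'b \<Rightarrow> bool" where
  "dvd_mod m x a \<longleftrightarrow> (\<exists>c. m dvd (a - x * c))"

definition prime_mod :: "'b::comm_ring_1 \<Rightarrow> 'b \<Rightarrow> bool" where
  "prime_mod m x \<longleftrightarrow> \<not> m dvd x \<and> \<not> dvd_mod m x 1 \<and>
     (\<forall>a b. dvd_mod m x (a * b) \<longrightarrow> dvd_mod m x a \<or> dvd_mod m x b)"

end

theory Submission
  imports Defs
begin

text \<open>Modulo u the relation uv - f becomes -f, so setting u = 0 identifies S/(u) with R[v]/(f);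
  symmetrically S/(v) is R[u]/(f). Hence u (resp. v) is prime in S iff the constant f is prime
  in a polynomial ring over R, i.e. iff f is prime in R. Without forming quotient rings, this
  amounts to transporting divisibility along the surjective multiplicative maps
  R[u][v] \<rightarrow> R[v] and R[u][v] \<rightarrow> R[u] that set u, resp. v, to 0.\<close>

lemma dvd_mod_add_mult_modulus:
  "dvd_mod (m + x * y) x a \<longleftrightarrow> dvd_mod m x a"
proof
  assume "dvd_mod (m + x * y) x a"
  then obtain c d where "a - x * c = (m + x * y) * d"
    unfolding dvd_mod_def dvd_def by blast
  then have "a - x * (c + y * d) = m * d"
    by (simp add: algebra_simps)
  then show "dvd_mod m x a"
    unfolding dvd_mod_def by (metis dvd_triv_left)
next
  assume "dvd_mod m x a"
  then obtain c d where "a - x * c = m * d"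
    unfolding dvd_mod_def dvd_def by blast
  then have "a - x * (c - y * d) = (m + x * y) * d"
    by (simp add: algebra_simps)
  then show "dvd_mod (m + x * y) x a"
    unfolding dvd_mod_def by (metis dvd_triv_left)
qed

lemma dvd_mod_uminus_modulus [simp]:
  "dvd_mod (- m) x a \<longleftrightarrow> dvd_mod m x a"
  by (simp add: dvd_mod_def)

lemma dvd_mod_pX_iff:
  "dvd_mod [:c:] [:0, 1:] p \<longleftrightarrow> c dvd coeff p 0"
proof
  assume "dvd_mod [:c:] [:0, 1:] p"
  then obtain q r where "p - [:0, 1:] * q = [:c:] * r"
    unfolding dvd_mod_def dvd_def by blast
  then have "coeff p 0 = c * coeff r 0"
    by (metis coeff_diff coeff_mult_0 coeff_pCons_0 diff_zero mult_zero_left)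
  then show "c dvd coeff p 0" by simp
next
  assume "c dvd coeff p 0"
  then obtain d where d: "coeff p 0 = c * d" unfolding dvd_def by blast
  obtain a q where p: "p = pCons a q" by (cases p)
  have "p - [:0, 1:] * q = [:c:] * [:d:]"
    using d by (simp add: p)
  then show "dvd_mod [:c:] [:0, 1:] p"
    unfolding dvd_mod_def by (metis dvd_triv_left)
qed

lemma dvd_mod_const_poly_iff:
  "dvd_mod [:c:] [:x:] p \<longleftrightarrow> (\<forall>n. dvd_mod c x (coeff p n))"
proof
  assume "dvd_mod [:c:] [:x:] p"
  then obtain q r where "p - [:x:] * q = [:c:] * r"
    unfolding dvd_mod_def dvd_def by blast
  then have "coeff p n - x * coeff q n = c * coeff r n" for n
    by (metis coeff_diff coeff_smult mult.left_neutral mult_smult_left smult_one)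
  then show "\<forall>n. dvd_mod c x (coeff p n)"
    unfolding dvd_mod_def by (metis dvd_triv_left)
next
  assume "\<forall>n. dvd_mod c x (coeff p n)"
  then have "\<forall>n. \<exists>a b. coeff p n - x * a = c * b"
    unfolding dvd_mod_def dvd_def by blast
  then obtain a b where ab: "\<And>n. coeff p n - x * a n = c * b n"
    by metis
  define q where "q = (\<Sum>n\<le>degree p. monom (a n) n)"
  define r where "r = (\<Sum>n\<le>degree p. monom (b n) n)"
  have "p - [:x:] * q = [:c:] * r"
  proof (rule poly_eqI)
    fix n
    show "coeff (p - [:x:] * q) n = coeff ([:c:] * r) n"
      using ab[of n] coeff_eq_0[of p n]
      by (auto simp: q_def r_def coeff_sum)
  qed
  then show "dvd_mod [:c:] [:x:] p"
    unfolding dvd_mod_def by (metis dvd_triv_left)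
qed

lemma prime_mod_iff_prime_elem:
  fixes h :: "'b::comm_ring_1 \<Rightarrow> 'c::comm_semiring_1"
  assumes "\<And>a. dvd_mod m x a \<longleftrightarrow> c dvd h a"
    and "\<And>a b. h (a * b) = h a * h b" and "h 1 = 1"
    and "surj h" and "\<not> m dvd x" and "c \<noteq> 0"
  shows "prime_mod m x \<longleftrightarrow> prime_elem c"
proof -
  have "(\<forall>a b. c dvd h a * h b \<longrightarrow> c dvd h a \<or> c dvd h b) \<longleftrightarrow>
        (\<forall>a b. c dvd a * b \<longrightarrow> c dvd a \<or> c dvd b)"
    using \<open>surj h\<close> by (metis surjD)
  then show ?thesis
    using assms by (simp add: prime_mod_def prime_elem_def)
qed

definition eval_u_zero :: "'a::comm_ring_1 poly poly \<Rightarrow> 'a poly" where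
  "eval_u_zero p = map_poly (\<lambda>q. coeff q 0) p"

lemma coeff_eval_u_zero: "coeff (eval_u_zero p) n = coeff (coeff p n) 0"
  by (simp add: eval_u_zero_def coeff_map_poly)

lemma eval_u_zero_mult: "eval_u_zero (p * q) = eval_u_zero p * eval_u_zero q"
  by (rule poly_eqI) (simp add: coeff_eval_u_zero coeff_mult coeff_sum coeff_mult_0)

lemma eval_u_zero_one: "eval_u_zero 1 = 1"
  by (simp add: eval_u_zero_def)

lemma surj_eval_u_zero: "surj eval_u_zero"
proof (rule surjI)
  show "eval_u_zero (map_poly (\<lambda>a. [:a:]) p) = p" for p :: "'a poly"
    by (rule poly_eqI) (simp add: coeff_eval_u_zero coeff_map_poly)
qed

lemma surj_coeff_0: "surj (\<lambda>p. coeff p 0)"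
  by (metis coeff_pCons_0 surjI)

lemma uv_rel_eq:
  "uv_rel f = - [:[:f:]:] + var_u * var_v"
  "uv_rel f = - [:[:f:]:] + var_v * var_u"
  by (simp_all add: uv_rel_def mult.commute)

lemma dvd_mod_uv_rel_var_u_iff:
  fixes f :: "'a::idom"
  shows "dvd_mod (uv_rel f) var_u p \<longleftrightarrow> [:f:] dvd eval_u_zero p"
proof -
  have "dvd_mod (uv_rel f) var_u p \<longleftrightarrow> dvd_mod [:[:f:]:] [:[:0, 1:]:] p"
    by (simp only: uv_rel_eq(1) dvd_mod_add_mult_modulus dvd_mod_uminus_modulus var_u_def)
  also have "\<dots> \<longleftrightarrow> (\<forall>n. f dvd coeff (coeff p n) 0)"
    by (simp add: dvd_mod_const_poly_iff dvd_mod_pX_iff)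
  also have "\<dots> \<longleftrightarrow> [:f:] dvd eval_u_zero p"
    by (simp add: const_poly_dvd_iff coeff_eval_u_zero)
  finally show ?thesis .
qed

lemma dvd_mod_uv_rel_var_v_iff:
  fixes f :: "'a::comm_ring_1"
  shows "dvd_mod (uv_rel f) var_v p \<longleftrightarrow> [:f:] dvd coeff p 0"
proof -
  have "dvd_mod (uv_rel f) var_v p \<longleftrightarrow> dvd_mod [:[:f:]:] [:0, 1:] p"
    by (simp only: uv_rel_eq(2) dvd_mod_add_mult_modulus dvd_mod_uminus_modulus var_v_def)
  then show ?thesis
    by (simp add: dvd_mod_pX_iff)
qed

lemma const_poly_dvd_pX_iff:
  fixes c :: "'a::idom"
  shows "[:c:] dvd [:0, 1:] \<longleftrightarrow> c dvd 1"
  by (auto simp: const_poly_dvd_iff coeff_pCons split: nat.splits)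

lemma uv_rel_not_dvd_var_u:
  fixes f :: "'a::idom"
  assumes "\<not> f dvd 1"
  shows "\<not> uv_rel f dvd var_u"
proof
  assume "uv_rel f dvd var_u"
  then have "coeff (uv_rel f) 0 dvd coeff var_u 0"
    by (metis coeff_mult_0 dvd_def)
  then have "[:- f:] dvd [:0, 1:]"
    by (simp add: uv_rel_def var_u_def var_v_def coeff_mult_0)
  with assms show False
    by (simp add: const_poly_dvd_pX_iff)
qed

lemma uv_rel_not_dvd_var_v:
  fixes f :: "'a::idom"
  assumes "\<not> f dvd 1"
  shows "\<not> uv_rel f dvd var_v"
proof
  assume "uv_rel f dvd var_v"
  then have "eval_u_zero (uv_rel f) dvd eval_u_zero var_v"
    by (metis eval_u_zero_mult dvd_def)
  then have "[:- f:] dvd [:0, 1:]"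
    by (simp add: uv_rel_def var_u_def var_v_def eval_u_zero_def map_poly_pCons)
  with assms show False
    by (simp add: const_poly_dvd_pX_iff)
qed

theorem proposition1p6:
  fixes f :: "'a::idom"
  assumes "f \<noteq> 0" and "\<not> f dvd 1"
  shows "(prime_mod (uv_rel f) var_u \<longleftrightarrow> prime_elem f) \<and>
         (prime_mod (uv_rel f) var_v \<longleftrightarrow> prime_elem f)"
proof
  have "prime_mod (uv_rel f) var_u \<longleftrightarrow> prime_elem [:f:]"
    by (rule prime_mod_iff_prime_elem[OF dvd_mod_uv_rel_var_u_iff eval_u_zero_mult
          eval_u_zero_one surj_eval_u_zero uv_rel_not_dvd_var_u[OF assms(2)]])
      (simp add: assms(1))
  then show "prime_mod (uv_rel f) var_u \<longleftrightarrow> prime_elem f"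
    by (simp add: prime_elem_const_poly_iff)
next
  have "prime_mod (uv_rel f) var_v \<longleftrightarrow> prime_elem [:f:]"
    by (rule prime_mod_iff_prime_elem[OF dvd_mod_uv_rel_var_v_iff coeff_mult_0
          _ surj_coeff_0 uv_rel_not_dvd_var_v[OF assms(2)]])
      (simp_all add: assms(1))
  then show "prime_mod (uv_rel f) var_v \<longleftrightarrow> prime_elem f"
    by (simp add: prime_elem_const_poly_iff)
qed

end
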